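(* Let $\mathbf{S}=\mathbf{V}\boldsymbol{\Lambda}\mathbf{V}^{\mathsf{H}}$ and $\hat{\mathbf{S}}$ be $N\times N$ graph shift operators. Let $\mathbf{E}=\mathbf{S}-\mathbf{P}_0^{\mathsf{T}}\hat{\mathbf{S}}\mathbf{P}_0$, where $\mathbf{P}_0\in\mathcal{P}$ attains $\min_{\mathbf{P}\in\mathcal{P}}\|\mathbf{S}-\mathbf{P}^{\mathsf{T}}\hat{\mathbf{S}}\mathbf{P}\|$ (the absolute perturbation modulo permutation), with eigendecomposition $\mathbf{E}=\mathbf{U}\mathbf{M}\mathbf{U}^{\mathsf{H}}$, and assume $$\|\mathbf{S}-\hat{\mathbf{S}}\|_{\mathcal{P}}=\|\mathbf{E}\|\le\varepsilon.$$ Then for any Lipschitz filter $\mathbf{h}$ with Lipschitz constant $C$, $$\|\mathbf{H}(\mathbf{S})-\mathbf{H}(\hat{\mathbf{S}})\|_{\mathcal{P}}\le C\left(1+\delta\sqrt{N}\right)\varepsilon+\mathcal{O}(\varepsilon^2),$$ where $\delta:=(\|\mathbf{U}-\mathbf{V}\|_2+1)^2-1$ is the eigenvector misalignment between $\mathbf{S}$ and $\mathbf{E}$.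
   Context: A graph shift operator is a real symmetric $N\times N$ matrix; $\mathbf{S}=\mathbf{V}\boldsymbol{\Lambda}\mathbf{V}^{\mathsf{H}}$ with $\mathbf{V}$ orthonormal eigenvectors and $\boldsymbol{\Lambda}$ diagonal eigenvalues; likewise $\mathbf{U}$ orthonormal and $\mathbf{M}$ diagonal for $\mathbf{E}$. $\|\cdot\|$ and $\|\cdot\|_2$ denote the spectral (operator) norm for matrices and Euclidean norm for vectors. $\mathcal{P}$ is the set of $N\times N$ permutation matrices. For linear operators, $\|\mathbf{A}-\hat{\mathbf{A}}\|_{\mathcal{P}}=\min_{\mathbf{P}\in\mathcal{P}}\max_{\|\mathbf{x}\|=1}\|\mathbf{P}^{\mathsf{T}}(\mathbf{A}\mathbf{x})-\hat{\mathbf{A}}(\mathbf{P}^{\mathsf{T}}\mathbf{x})\|$. A filter is a coefficient sequence $\mathbf{h}=\{h_k\}_{k\ge0}$ defining $\mathbf{H}(\mathbf{S})=\sum_k h_k\mathbf{S}^k$ and frequency response $h(\lambda)=\sum_k h_k\lambda^k$ (an analytic function), required to satisfy $|h(\lambda)|\le1$. The filter is Lipschitz with constant $C>0$ if $|h(\lambda_2)-h(\lambda_1)|\le C|\lambda_2-\lambda_1|$ for all $\lambda_1,\lambda_2$. $\mathcal{O}(\varepsilon^2)$ denotes a term bounded by a constant times $\varepsilon^2$. *)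

theory Defs
  imports "HOL-Analysis.Analysis"
begin

(* Square real matrices of size N = CARD('n) are rendered as real^'n^'n. *)

definition spec_norm :: "real^'n^'n \<Rightarrow> real" where
  "spec_norm A = onorm (\<lambda>x. A *v x)"

primrec mat_pow :: "real^'n^'n \<Rightarrow> nat \<Rightarrow> real^'n^'n" where
  "mat_pow A 0 = mat 1"
| "mat_pow A (Suc k) = A ** mat_pow A k"

text \<open>Graph shift operator: real symmetric matrix.\<close>
definition symmetric_mat :: "real^'n^'n \<Rightarrow> bool" where
  "symmetric_mat A \<longleftrightarrow> transpose A = A"

definition diagonal_mat :: "real^'n^'n \<Rightarrow> bool" where
  "diagonal_mat D \<longleftrightarrow> (\<forall>i j. i \<noteq> j \<longrightarrow> D $ i $ j = 0)"

definition perm_mat :: "('n \<Rightarrow> 'n) \<Rightarrow> real^'n^'n" where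
  "perm_mat p = (\<chi> i j. if i = p j then 1 else 0)"

definition perm_mats :: "(real^'n^'n) set" where
  "perm_mats = {perm_mat p | p. p permutes (UNIV :: 'n set)}"

definition perm_dist :: "real^'n^'n \<Rightarrow> real^'n^'n \<Rightarrow> real" where
  "perm_dist A B = Min ((\<lambda>P. onorm (\<lambda>x. transpose P *v (A *v x) - B *v (transpose P *v x))) ` perm_mats)"

definition freq_resp :: "(nat \<Rightarrow> real) \<Rightarrow> real \<Rightarrow> real" where
  "freq_resp h t = (\<Sum>k. h k * t ^ k)"

definition graph_filter :: "(nat \<Rightarrow> real) \<Rightarrow> real^'n^'n \<Rightarrow> real^'n^'n" where
  "graph_filter h S = (\<Sum>k. h k *\<^sub>R mat_pow S k)"

end

theory Submission
  imports Defs
begin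

text \<open>
  Write \<open>S = V diag(\<lambda>) V\<^sup>T\<close>, \<open>E = U diag(\<mu>) U\<^sup>T\<close> and \<open>B = P\<^sub>0\<^sup>T \<hat>S P\<^sub>0 = S - E\<close>,
  and pass from \<open>S\<close> to \<open>B\<close> through \<open>T = V diag(\<lambda> - \<mu>) V\<^sup>T\<close>. Since \<open>|\<mu>\<^sub>i| \<le> \<parallel>E\<parallel>\<close>,
  the Lipschitz filter moves every eigenvalue of \<open>H(S)\<close> by at most \<open>C \<parallel>E\<parallel>\<close> on the way
  to \<open>H(T)\<close>. The matrices \<open>T\<close> and \<open>B\<close> differ only by the misalignment of the eigenbases,
  \<open>T - B = U diag(\<mu>) U\<^sup>T - V diag(\<mu>) V\<^sup>T\<close>, of norm at most \<open>2 \<parallel>U - V\<parallel> \<parallel>E\<parallel>\<close>. For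
  symmetric matrices with unrelated eigenbases, a Lipschitz function is Lipschitz in the
  Frobenius norm, and comparing the Frobenius with the spectral norm costs \<open>\<surd>N\<close>. Since
  \<open>2 d \<le> (d + 1)\<^sup>2 - 1\<close>, no second-order term is needed.
\<close>

section \<open>Frobenius norm\<close>

lemma norm_power2_vec: "(norm (x::real^'n))\<^sup>2 = (\<Sum>i\<in>UNIV. (x $ i)\<^sup>2)"
  unfolding norm_vec_def L2_set_def by (simp add: sum_nonneg)

lemma norm_power2_matrix_rows: "(norm (X::real^'n^'m))\<^sup>2 = (\<Sum>i\<in>UNIV. (norm (X $ i))\<^sup>2)"
  unfolding norm_vec_def[of X] L2_set_def by (simp add: sum_nonneg)

lemma norm_power2_matrix: "(norm (X::real^'n^'m))\<^sup>2 = (\<Sum>i\<in>UNIV. \<Sum>j\<in>UNIV. (X $ i $ j)\<^sup>2)"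
  by (simp add: norm_power2_matrix_rows norm_power2_vec)

lemma norm_transpose: "norm (transpose (X::real^'n^'m)) = norm X"
proof -
  have "(norm (transpose X))\<^sup>2 = (norm X)\<^sup>2"
    unfolding norm_power2_matrix transpose_def by (simp add: sum.swap[of _ "UNIV::'n set"])
  then show ?thesis by simp
qed

lemma orthogonal_matrix_norm_mult:
  assumes "orthogonal_matrix (Q::real^'n^'n)"
  shows "norm (Q *v x) = norm x"
proof -
  have "inner (Q *v x) (Q *v x) = inner x x"
    by (metis assms dot_lmul_matrix matrix_vector_mul_assoc matrix_vector_mul_lid
        orthogonal_matrix_def transpose_matrix_vector)
  then show ?thesis by (simp add: norm_eq_sqrt_inner)
qed

lemma matrix_matrix_mult_row: "((A::real^'n^'m) ** B) $ i = transpose B *v (A $ i)"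
  by (auto simp: vec_eq_iff matrix_matrix_mult_def matrix_vector_mult_def transpose_def
      mult.commute intro!: sum.cong)

lemma norm_matrix_mult_orthogonal_right:
  assumes "orthogonal_matrix (Q::real^'n^'n)"
  shows "norm ((X::real^'n^'m) ** Q) = norm X"
proof -
  have "(norm (X ** Q))\<^sup>2 = (norm X)\<^sup>2"
    using assms orthogonal_matrix_norm_mult[of "transpose Q"]
    unfolding norm_power2_matrix_rows matrix_matrix_mult_row by simp
  then show ?thesis by simp
qed

lemma norm_matrix_mult_orthogonal_left:
  assumes "orthogonal_matrix (Q::real^'n^'n)"
  shows "norm (Q ** (X::real^'m^'n)) = norm X"
  by (metis assms matrix_transpose_mul norm_matrix_mult_orthogonal_right norm_transpose
      orthogonal_matrix_transpose)

lemma spec_norm_nonneg: "0 \<le> spec_norm A"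
  unfolding spec_norm_def by (rule onorm_pos_le) simp

lemma spec_norm_mult_vec: "norm (A *v x) \<le> spec_norm A * norm x"
  unfolding spec_norm_def by (rule onorm) simp

lemma spec_norm_le: "(\<And>x. norm (A *v x) \<le> K * norm x) \<Longrightarrow> spec_norm A \<le> K"
  unfolding spec_norm_def by (rule onorm_le)

lemma spec_norm_triangle: "spec_norm (A + B) \<le> spec_norm A + spec_norm B"
proof -
  have "(\<lambda>x. (A + B) *v x) = (\<lambda>x. A *v x + B *v x)"
    by (simp add: matrix_vector_mult_add_rdistrib)
  then show ?thesis unfolding spec_norm_def by (simp add: onorm_triangle)
qed

lemma spec_norm_mult: "spec_norm (A ** B) \<le> spec_norm A * spec_norm B"
proof -
  have "(\<lambda>x. (A ** B) *v x) = (\<lambda>x. A *v x) \<circ> (\<lambda>x. B *v x)"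
    by (simp add: o_def matrix_vector_mul_assoc)
  then show ?thesis unfolding spec_norm_def
    by (metis onorm_compose matrix_vector_mul_bounded_linear)
qed

lemma spec_norm_transpose_le: "spec_norm (transpose A) \<le> spec_norm A"
proof (rule spec_norm_le)
  fix x
  let ?y = "transpose A *v x"
  have "(norm ?y)\<^sup>2 = inner x (A *v ?y)"
    by (metis dot_lmul_matrix power2_norm_eq_inner transpose_matrix_vector)
  also have "\<dots> \<le> norm x * (spec_norm A * norm ?y)"
    by (intro order_trans[OF norm_cauchy_schwarz] mult_left_mono spec_norm_mult_vec) simp
  finally have "norm ?y * norm ?y \<le> (spec_norm A * norm x) * norm ?y"
    by (simp add: power2_eq_square mult_ac)
  then show "norm ?y \<le> spec_norm A * norm x"
    using spec_norm_nonneg[of A] by (cases "norm ?y = 0") auto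
qed

lemma spec_norm_transpose: "spec_norm (transpose A) = spec_norm A"
  using spec_norm_transpose_le[of A] spec_norm_transpose_le[of "transpose A"] by simp

lemma spec_norm_orthogonal_mult_left:
  assumes "orthogonal_matrix Q"
  shows "spec_norm (Q ** A) = spec_norm A"
proof (rule antisym)
  show "spec_norm (Q ** A) \<le> spec_norm A"
    using assms by (intro spec_norm_le)
      (simp add: orthogonal_matrix_norm_mult spec_norm_mult_vec flip: matrix_vector_mul_assoc)
  show "spec_norm A \<le> spec_norm (Q ** A)"
    using assms spec_norm_mult_vec[of "Q ** A"]
    by (intro spec_norm_le) (simp add: orthogonal_matrix_norm_mult flip: matrix_vector_mul_assoc)
qed

lemma spec_norm_orthogonal_mult_right:
  assumes "orthogonal_matrix Q"
  shows "spec_norm (A ** Q) = spec_norm A"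
  by (metis assms matrix_transpose_mul orthogonal_matrix_transpose
      spec_norm_orthogonal_mult_left spec_norm_transpose)

lemma spec_norm_orthogonal_conj:
  assumes "orthogonal_matrix Q"
  shows "spec_norm (Q ** A ** transpose Q) = spec_norm A"
  using assms by (simp add: spec_norm_orthogonal_mult_left spec_norm_orthogonal_mult_right)

lemma spec_norm_le_norm: "spec_norm A \<le> norm A"
proof (rule spec_norm_le)
  fix x
  have "(norm (A *v x))\<^sup>2 = (\<Sum>i\<in>UNIV. (inner (A $ i) x)\<^sup>2)"
    unfolding norm_power2_vec by (simp add: matrix_mult_dot)
  also have "\<dots> \<le> (\<Sum>i\<in>UNIV. (norm (A $ i))\<^sup>2 * (norm x)\<^sup>2)"
  proof (rule sum_mono)
    fix i
    have "\<bar>inner (A $ i) x\<bar>\<^sup>2 \<le> (norm (A $ i) * norm x)\<^sup>2"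
      by (meson Cauchy_Schwarz_ineq2 abs_ge_zero power_mono)
    then show "(inner (A $ i) x)\<^sup>2 \<le> (norm (A $ i))\<^sup>2 * (norm x)\<^sup>2"
      by (simp add: power_mult_distrib)
  qed
  also have "\<dots> = (norm A * norm x)\<^sup>2"
    by (simp add: norm_power2_matrix_rows power_mult_distrib sum_distrib_right)
  finally show "norm (A *v x) \<le> norm A * norm x"
    by (simp add: power2_le_iff_abs_le)
qed

lemma norm_le_sqrt_card_spec_norm: "norm (A::real^'n^'n) \<le> sqrt (real CARD('n)) * spec_norm A"
proof -
  have "(norm A)\<^sup>2 = (\<Sum>j\<in>UNIV. (norm (column j A))\<^sup>2)"
    using norm_transpose[of A] norm_power2_matrix_rows[of "transpose A"]
    by (simp add: transpose_def column_def)
  also have "\<dots> \<le> (\<Sum>j\<in>(UNIV::'n set). (spec_norm A)\<^sup>2)"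
    unfolding spec_norm_def by (intro sum_mono power_mono norm_column_le_onorm) simp
  also have "\<dots> = (sqrt (real CARD('n)) * spec_norm A)\<^sup>2"
    by (simp add: power_mult_distrib)
  finally show ?thesis
    using spec_norm_nonneg[of A] by (simp add: power2_le_iff_abs_le)
qed

lemma matrix_diff_ldistrib: "(A::real^'n^'m) ** (B - C) = A ** B - A ** C"
  by (simp add: vec_eq_iff matrix_matrix_mult_def sum_subtractf right_diff_distrib)

lemma matrix_diff_rdistrib: "((A::real^'n^'m) - B) ** C = A ** C - B ** C"
  by (simp add: vec_eq_iff matrix_matrix_mult_def sum_subtractf left_diff_distrib)

lemma transpose_diff: "transpose ((A::real^'n^'m) - B) = transpose A - transpose B"
  by (simp add: vec_eq_iff transpose_def)

definition diag_mat :: "('n \<Rightarrow> real) \<Rightarrow> real^'n^'n" where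
  "diag_mat d = (\<chi> i j. if i = j then d i else 0)"

lemma diagonal_mat_eq_diag_mat: "diagonal_mat D \<Longrightarrow> D = diag_mat (\<lambda>i. D $ i $ i)"
  by (auto simp: vec_eq_iff diagonal_mat_def diag_mat_def)

lemma diag_mat_diff: "diag_mat a - diag_mat b = diag_mat (\<lambda>i. a i - b i)"
  by (simp add: vec_eq_iff diag_mat_def)

lemma diag_mat_conj_diff:
  "V ** diag_mat a ** W - V ** diag_mat b ** W = V ** diag_mat (\<lambda>i. a i - b i) ** W"
  by (simp add: matrix_diff_ldistrib matrix_diff_rdistrib flip: diag_mat_diff)

lemma diag_mat_one: "diag_mat (\<lambda>i. 1) = mat 1"
  by (simp add: vec_eq_iff diag_mat_def mat_def)

lemma diag_mat_mult_left_entry: "(diag_mat a ** B) $ i $ j = a i * B $ i $ j"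
  by (simp add: matrix_matrix_mult_def diag_mat_def if_distrib[of "\<lambda>x. x * _"] cong: if_cong)

lemma diag_mat_mult_right_entry: "(A ** diag_mat b) $ i $ j = A $ i $ j * b j"
  by (simp add: matrix_matrix_mult_def diag_mat_def if_distrib cong: if_cong)

lemma diag_mat_mult: "diag_mat a ** diag_mat b = diag_mat (\<lambda>i. a i * b i)"
  by (simp add: vec_eq_iff diag_mat_mult_left_entry) (simp add: diag_mat_def)

lemma diag_mat_conj_entry:
  "(V ** diag_mat d ** W) $ r $ s = (\<Sum>k\<in>UNIV. V $ r $ k * d k * W $ k $ s)"
  unfolding matrix_matrix_mult_def[of "V ** diag_mat d"] by (simp add: diag_mat_mult_right_entry)

lemma diag_mat_conj_expand:
  "V ** diag_mat d ** W = (\<Sum>i\<in>UNIV. d i *\<^sub>R (\<chi> r s. V $ r $ i * W $ i $ s))"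
  by (simp add: vec_eq_iff diag_mat_conj_entry mult_ac)

lemma abs_le_spec_norm_diag_mat: "\<bar>d i\<bar> \<le> spec_norm (diag_mat d)"
  using matrix_component_le_onorm[of "diag_mat d" i i] by (simp add: spec_norm_def diag_mat_def)

lemma orthogonal_conj_mult:
  assumes "orthogonal_matrix V"
  shows "(V ** A ** transpose V) ** (V ** B ** transpose V) = V ** (A ** B) ** transpose V"
proof -
  have VV: "transpose V ** V = mat 1"
    using assms by (simp add: orthogonal_matrix_def)
  have "(V ** A ** transpose V) ** (V ** B ** transpose V)
      = V ** A ** (transpose V ** V) ** B ** transpose V"
    by (simp add: matrix_mul_assoc)
  also have "\<dots> = V ** (A ** B) ** transpose V"
    by (simp add: VV matrix_mul_assoc)
  finally show ?thesis .
qed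

lemma mat_pow_orthogonal_conj:
  assumes "orthogonal_matrix V"
  shows "mat_pow (V ** A ** transpose V) k = V ** mat_pow A k ** transpose V"
  using assms by (induction k) (simp_all add: orthogonal_matrix_def orthogonal_conj_mult)

lemma mat_pow_diag_mat: "mat_pow (diag_mat l) k = diag_mat (\<lambda>i. l i ^ k)"
  by (induction k) (simp_all add: diag_mat_one diag_mat_mult)

lemma spec_norm_diag_mat_le:
  assumes "\<And>i. \<bar>d i\<bar> \<le> K"
  shows "spec_norm (diag_mat d :: real^'n^'n) \<le> K"
proof (rule spec_norm_le)
  fix x :: "real^'n"
  have K: "K \<ge> 0" using assms[of undefined] by simp
  have "(norm (diag_mat d *v x))\<^sup>2 = (\<Sum>i\<in>UNIV. (d i * x $ i)\<^sup>2)"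
    unfolding norm_power2_vec
    by (simp add: matrix_vector_mult_def diag_mat_def if_distrib[of "\<lambda>x. x * _"] cong: if_cong)
  also have "\<dots> \<le> (\<Sum>i\<in>UNIV. K\<^sup>2 * (x $ i)\<^sup>2)"
  proof (rule sum_mono)
    fix i
    have "(d i)\<^sup>2 \<le> K\<^sup>2"
      using assms[of i] by (metis abs_ge_zero power2_abs power_mono)
    then show "(d i * x $ i)\<^sup>2 \<le> K\<^sup>2 * (x $ i)\<^sup>2"
      by (simp add: power_mult_distrib mult_right_mono)
  qed
  also have "\<dots> = (K * norm x)\<^sup>2"
    by (simp add: norm_power2_vec power_mult_distrib sum_distrib_left)
  finally show "norm (diag_mat d *v x) \<le> K * norm x"
    using K by (simp add: power2_le_iff_abs_le)
qed

lemma spec_norm_orthogonal_conj_diff_le: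
  assumes U: "orthogonal_matrix U" and V: "orthogonal_matrix V"
  shows "spec_norm (U ** M ** transpose U - V ** M ** transpose V)
    \<le> 2 * spec_norm (U - V) * spec_norm M"
proof -
  have split: "U ** M ** transpose U - V ** M ** transpose V
      = (U - V) ** M ** transpose U + V ** M ** transpose (U - V)"
    by (simp add: matrix_diff_ldistrib matrix_diff_rdistrib transpose_diff)
  have "spec_norm ((U - V) ** M ** transpose U) \<le> spec_norm (U - V) * spec_norm M"
    using U spec_norm_mult[of "U - V" M] by (simp add: spec_norm_orthogonal_mult_right)
  moreover have "spec_norm (V ** M ** transpose (U - V)) \<le> spec_norm (U - V) * spec_norm M"
    using V spec_norm_mult[of M "transpose (U - V)"]
    by (simp add: spec_norm_orthogonal_mult_left spec_norm_transpose mult.commute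
        flip: matrix_mul_assoc)
  ultimately show ?thesis
    using spec_norm_triangle[of "(U - V) ** M ** transpose U" "V ** M ** transpose (U - V)"]
    unfolding split by linarith
qed

section \<open>Spectral theorem for real symmetric matrices\<close>

lemma linear_coeff_eq_0_if_nonneg:
  fixes a b :: real
  assumes "\<And>t. 0 \<le> t * a + t\<^sup>2 * b"
  shows "a = 0"
proof (rule ccontr)
  assume "a \<noteq> 0"
  define s where "s = \<bar>b\<bar> + 1"
  have "s > 0"
    by (simp add: s_def add_nonneg_pos)
  have "(- a / s) * a + (- a / s)\<^sup>2 * b \<le> (- a / s) * a + (- a / s)\<^sup>2 * (s - 1)"
    by (simp add: s_def mult_left_mono)
  also have "\<dots> = - a\<^sup>2 / s\<^sup>2"
    using \<open>s > 0\<close> by (simp add: field_simps power2_eq_square)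
  also have "\<dots> < 0"
    using \<open>a \<noteq> 0\<close> \<open>s > 0\<close> by simp
  finally show False
    using assms[of "- a / s"] by simp
qed

lemma symmetric_matrix_inner_commute:
  assumes "transpose A = (A::real^'n^'n)"
  shows "inner (A *v x) y = inner x (A *v y)"
  by (metis assms dot_lmul_matrix vector_transpose_matrix)

lemma symmetric_matrix_eigenvector_orthogonal_mult:
  assumes "transpose A = (A::real^'n^'n)" and "A *v b = c *\<^sub>R b" and "inner b y = 0"
  shows "inner b (A *v y) = 0"
  using assms by (metis symmetric_matrix_inner_commute inner_scaleR_left mult_zero_right)

text \<open>The form \<open>q y = c \<langle>y, y\<rangle> - \<langle>y, A y\<rangle>\<close> is nonnegative on \<open>W\<close> and vanishes at \<open>u\<close>;
  its expansion along \<open>u + t v\<close> with \<open>v = c u - A u\<close> has linear coefficient \<open>2 \<langle>v, v\<rangle>\<close>.\<close>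

lemma rayleigh_maximizer_is_eigenvector:
  fixes A :: "real^'n^'n"
  assumes sym: "transpose A = A"
    and W: "subspace W" and inv: "\<And>y. y \<in> W \<Longrightarrow> A *v y \<in> W"
    and u: "u \<in> W" "norm u = 1"
    and max: "\<And>y. y \<in> W \<Longrightarrow> inner y (A *v y) \<le> inner u (A *v u) * inner y y"
  shows "A *v u = inner u (A *v u) *\<^sub>R u"
proof -
  define c where "c = inner u (A *v u)"
  define q where "q y = c * inner y y - inner y (A *v y)" for y
  define v where "v = c *\<^sub>R u - A *v u"
  have v: "v \<in> W"
    unfolding v_def using W u inv by (intro subspace_diff subspace_scale) auto
  have uu: "inner u u = 1"
    using u by (simp add: norm_eq_1)
  have "inner u (A *v v) = inner v (A *v u)"
    using symmetric_matrix_inner_commute[OF sym, of u v] by (simp add: inner_commute)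
  then have "q (u + t *\<^sub>R v) = q u + t * 2 * (c * inner u v - inner v (A *v u)) + t\<^sup>2 * q v"
    for t
    by (simp add: q_def inner_commute[of v u] power2_eq_square algebra_simps)
  moreover have "q u = 0"
    by (simp add: q_def uu c_def)
  moreover have "c * inner u v - inner v (A *v u) = inner v v"
    unfolding v_def
    by (simp add: inner_commute[of "A *v u" u] algebra_simps)
  moreover have "0 \<le> q (u + t *\<^sub>R v)" for t
    using max[of "u + t *\<^sub>R v"] W u v
    by (simp add: q_def c_def subspace_add subspace_scale)
  ultimately have "0 \<le> t * (2 * inner v v) + t\<^sup>2 * q v" for t
    by (metis add_0 mult.assoc)
  then have "2 * inner v v = 0"
    by (rule linear_coeff_eq_0_if_nonneg)
  then show ?thesis
    by (simp add: v_def c_def)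
qed

lemma symmetric_matrix_eigenvector_in_invariant_subspace:
  fixes A :: "real^'n^'n"
  assumes sym: "transpose A = A"
    and W: "subspace W" and inv: "\<And>y. y \<in> W \<Longrightarrow> A *v y \<in> W"
    and x: "x \<in> W" "x \<noteq> 0"
  obtains u c where "u \<in> W" "norm u = 1" "A *v u = c *\<^sub>R u"
proof -
  define K where "K = W \<inter> sphere 0 1"
  have "compact K"
    unfolding K_def by (metis compact_sphere closed_subspace W compact_Int_closed Int_commute)
  moreover have "x /\<^sub>R norm x \<in> K"
    using x W by (simp add: K_def subspace_scale)
  moreover have "continuous_on K (\<lambda>y. inner y (A *v y))"
    by (intro continuous_intros)
  ultimately obtain u where "u \<in> K"
    and umax: "\<And>y. y \<in> K \<Longrightarrow> inner y (A *v y) \<le> inner u (A *v u)"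
    using continuous_attains_sup[of K "\<lambda>y. inner y (A *v y)"] by blast
  then have u: "u \<in> W" "norm u = 1"
    by (auto simp: K_def)
  have "inner y (A *v y) \<le> inner u (A *v u) * inner y y" if "y \<in> W" for y
  proof (cases "y = 0")
    case False
    have "y /\<^sub>R norm y \<in> K"
      using that W False by (simp add: K_def subspace_scale)
    then have "inner y (A *v y) / (norm y)\<^sup>2 \<le> inner u (A *v u)"
      using umax[of "y /\<^sub>R norm y"]
      by (simp add: matrix_vector_mult_scaleR power2_eq_square divide_inverse mult_ac)
    then show ?thesis
      using False by (simp add: divide_le_eq power2_norm_eq_inner)
  qed simp
  then have "A *v u = inner u (A *v u) *\<^sub>R u"
    using rayleigh_maximizer_is_eigenvector[OF sym W inv u] by blast
  with u that show thesis
    by blast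
qed

lemma symmetric_matrix_orthonormal_eigenvectors:
  fixes A :: "real^'n^'n"
  assumes sym: "transpose A = A" and "k \<le> CARD('n)"
  shows "\<exists>B. finite B \<and> card B = k \<and> pairwise orthogonal B \<and>
    (\<forall>b\<in>B. norm b = 1 \<and> (\<exists>c. A *v b = c *\<^sub>R b))"
  using assms(2)
proof (induction k)
  case 0
  show ?case
    by (intro exI[of _ "{}"]) auto
next
  case (Suc k)
  then obtain B where B: "finite B" "card B = k" "pairwise orthogonal B"
    and eig: "\<forall>b\<in>B. norm b = 1 \<and> (\<exists>c. A *v b = c *\<^sub>R b)"
    by auto
  define W where "W = {y. \<forall>b\<in>B. inner b y = 0}"
  have W: "subspace W"
    unfolding subspace_def W_def by (auto simp: inner_add_right)
  have inv: "A *v y \<in> W" if "y \<in> W" for y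
    using that eig symmetric_matrix_eigenvector_orthogonal_mult[OF sym] by (fastforce simp: W_def)
  have "dim B < DIM(real^'n)"
    using dim_le_card[of B B] B Suc.prems by (simp add: span_superset)
  then obtain x :: "real^'n" where "x \<noteq> 0" "\<And>y. y \<in> span B \<Longrightarrow> orthogonal x y"
    using orthogonal_to_subspace_exists by blast
  then have "x \<in> W" "x \<noteq> 0"
    by (auto simp: W_def orthogonal_def inner_commute span_base)
  then obtain u c where u: "u \<in> W" "norm u = 1" "A *v u = c *\<^sub>R u"
    using symmetric_matrix_eigenvector_in_invariant_subspace[OF sym W inv] by blast
  then have "u \<notin> B"
    by (auto simp: W_def)
  show ?case
  proof (intro exI[of _ "insert u B"] conjI)
    show "finite (insert u B)" "card (insert u B) = Suc k"
      using B \<open>u \<notin> B\<close> by simp_all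
    show "pairwise orthogonal (insert u B)"
      using B(3) u(1) by (auto simp: W_def pairwise_insert orthogonal_def inner_commute)
    show "\<forall>b\<in>insert u B. norm b = 1 \<and> (\<exists>c. A *v b = c *\<^sub>R b)"
      using eig u by auto
  qed
qed

theorem symmetric_matrix_orthogonally_diagonalizable:
  fixes A :: "real^'n^'n"
  assumes sym: "transpose A = A"
  obtains V d where "orthogonal_matrix V" "A = V ** diag_mat d ** transpose V"
proof -
  obtain B where B: "finite B" "card B = CARD('n)" "pairwise orthogonal B"
    and eig: "\<forall>b\<in>B. norm b = 1 \<and> (\<exists>c. A *v b = c *\<^sub>R b)"
    using symmetric_matrix_orthonormal_eigenvectors[OF sym, of "CARD('n)"] by auto
  obtain f where f: "bij_betw f (UNIV::'n set) B"
    using finite_same_card_bij[of "UNIV::'n set" B] B by auto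
  define V where "V = (\<chi> i j. f j $ i)"
  have "orthogonal (f i) (f j)" if "i \<noteq> j" for i j
    using B(3) f that by (auto simp: pairwise_def bij_betw_def inj_on_def)
  then have "orthogonal_matrix V"
    using eig bij_betwE[OF f]
    by (auto simp: V_def orthogonal_matrix_orthonormal_columns column_def)
  moreover have "\<forall>j. \<exists>c. A *v f j = c *\<^sub>R f j"
    using eig bij_betwE[OF f] by blast
  then obtain d where d: "\<And>j. A *v f j = d j *\<^sub>R f j"
    by metis
  have "(A ** V) $ i $ j = (V ** diag_mat d) $ i $ j" for i j
  proof -
    have "(A ** V) $ i $ j = (A *v f j) $ i"
      by (simp add: V_def matrix_matrix_mult_def matrix_vector_mult_def)
    then show ?thesis
      by (simp add: d diag_mat_mult_right_entry V_def)
  qed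
  then have "A ** V = V ** diag_mat d"
    by (simp add: vec_eq_iff)
  ultimately have "A = V ** diag_mat d ** transpose V"
    by (metis matrix_mul_assoc matrix_mul_rid orthogonal_matrix_def)
  with \<open>orthogonal_matrix V\<close> that show thesis
    by blast
qed

lemma graph_filter_diag_conj:
  assumes V: "orthogonal_matrix V" and h_conv: "\<And>t. summable (\<lambda>k. h k * t ^ k)"
  shows "graph_filter h (V ** diag_mat l ** transpose V)
    = V ** diag_mat (\<lambda>i. freq_resp h (l i)) ** transpose V"
proof -
  define R where "R i = (\<chi> r s. V $ r $ i * transpose V $ i $ s)" for i
  have "h k *\<^sub>R mat_pow (V ** diag_mat l ** transpose V) k
      = (\<Sum>i\<in>UNIV. (h k * l i ^ k) *\<^sub>R R i)" for k
    using V by (simp only: mat_pow_orthogonal_conj mat_pow_diag_mat)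
      (simp add: diag_mat_conj_expand R_def scaleR_sum_right)
  moreover have "(\<lambda>k. \<Sum>i\<in>UNIV. (h k * l i ^ k) *\<^sub>R R i)
      sums (\<Sum>i\<in>UNIV. freq_resp h (l i) *\<^sub>R R i)"
    unfolding freq_resp_def by (intro sums_sum sums_scaleR_left summable_sums h_conv)
  ultimately have "graph_filter h (V ** diag_mat l ** transpose V)
      = (\<Sum>i\<in>UNIV. freq_resp h (l i) *\<^sub>R R i)"
    unfolding graph_filter_def by (simp add: sums_iff)
  then show ?thesis
    by (simp add: diag_mat_conj_expand R_def)
qed

lemma graph_filter_orthogonal_conj:
  assumes B: "transpose B = B" and P: "orthogonal_matrix P"
    and h_conv: "\<And>t. summable (\<lambda>k. h k * t ^ k)"
  shows "graph_filter h (transpose P ** B ** P) = transpose P ** graph_filter h B ** P"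
proof -
  obtain W g where W: "orthogonal_matrix W" and B_eq: "B = W ** diag_mat g ** transpose W"
    using symmetric_matrix_orthogonally_diagonalizable[OF B] by blast
  define Q where "Q = transpose P ** W"
  have "orthogonal_matrix Q"
    using P W by (simp add: Q_def orthogonal_matrix_mul)
  moreover have conj: "transpose P ** (W ** D ** transpose W) ** P = Q ** D ** transpose Q" for D
    by (simp add: Q_def matrix_transpose_mul matrix_mul_assoc)
  ultimately show ?thesis
    using W by (simp add: B_eq graph_filter_diag_conj h_conv)
qed

text \<open>In the bases \<open>V\<close> and \<open>Q\<close> the difference has entries \<open>(a\<^sub>i - b\<^sub>j) R\<^sub>i\<^sub>j\<close> with
  \<open>R = V\<^sup>T Q\<close>, and the Frobenius norm is invariant under this change of bases.\<close>

lemma norm_diag_conj_diff_lipschitz: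
  assumes V: "orthogonal_matrix V" and Q: "orthogonal_matrix Q"
    and lip: "\<And>s t. \<bar>f s - f t\<bar> \<le> C * \<bar>s - t\<bar>"
  shows "norm (V ** diag_mat (\<lambda>i. f (a i)) ** transpose V
      - Q ** diag_mat (\<lambda>i. f (b i)) ** transpose Q)
    \<le> C * norm (V ** diag_mat a ** transpose V - Q ** diag_mat b ** transpose Q)"
proof -
  have C: "C \<ge> 0"
    using lip[of 1 0] by simp
  define R where "R = transpose V ** Q"
  have change_basis: "norm (V ** diag_mat d ** transpose V - Q ** diag_mat e ** transpose Q)
      = norm (diag_mat d ** R - R ** diag_mat e)" for d e
  proof -
    have "transpose V ** (V ** diag_mat d ** transpose V - Q ** diag_mat e ** transpose Q) ** Q
        = (transpose V ** V) ** diag_mat d ** R - R ** diag_mat e ** (transpose Q ** Q)"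
      by (simp add: R_def matrix_diff_ldistrib matrix_diff_rdistrib matrix_mul_assoc)
    also have "\<dots> = diag_mat d ** R - R ** diag_mat e"
      using V Q by (simp add: orthogonal_matrix_def)
    finally show ?thesis
      using V Q by (metis norm_matrix_mult_orthogonal_left norm_matrix_mult_orthogonal_right
          orthogonal_matrix_transpose)
  qed
  have entry: "(diag_mat d ** R - R ** diag_mat e) $ i $ j = (d i - e j) * R $ i $ j" for d e i j
    by (simp add: diag_mat_mult_left_entry diag_mat_mult_right_entry algebra_simps)
  have "(norm (diag_mat (\<lambda>i. f (a i)) ** R - R ** diag_mat (\<lambda>i. f (b i))))\<^sup>2
      = (\<Sum>i\<in>UNIV. \<Sum>j\<in>UNIV. ((f (a i) - f (b j)) * R $ i $ j)\<^sup>2)"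
    by (simp only: norm_power2_matrix entry)
  also have "\<dots> \<le> (\<Sum>i\<in>UNIV. \<Sum>j\<in>UNIV. C\<^sup>2 * ((a i - b j) * R $ i $ j)\<^sup>2)"
  proof (intro sum_mono)
    fix i j
    have "\<bar>f (a i) - f (b j)\<bar>\<^sup>2 \<le> (C * \<bar>a i - b j\<bar>)\<^sup>2"
      by (meson lip abs_ge_zero power_mono)
    then have "(f (a i) - f (b j))\<^sup>2 * (R $ i $ j)\<^sup>2 \<le> (C * \<bar>a i - b j\<bar>)\<^sup>2 * (R $ i $ j)\<^sup>2"
      by (simp add: mult_right_mono)
    then show "((f (a i) - f (b j)) * R $ i $ j)\<^sup>2 \<le> C\<^sup>2 * ((a i - b j) * R $ i $ j)\<^sup>2"
      by (simp add: power_mult_distrib mult.assoc)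
  qed
  also have "\<dots> = (C * norm (diag_mat a ** R - R ** diag_mat b))\<^sup>2"
    by (simp only: power_mult_distrib[of C] norm_power2_matrix entry sum_distrib_left)
  finally show ?thesis
    using C by (simp add: change_basis power2_le_iff_abs_le)
qed

section \<open>Permutation matrices\<close>

lemma perm_mat_transpose:
  assumes p: "p permutes (UNIV::'n set)"
  shows "transpose (perm_mat p :: real^'n^'n) = perm_mat (inv p)"
proof -
  have "(i = inv p j) = (j = p i)" for i j
    using permutes_inv_eq[OF p] by metis
  then show ?thesis
    by (simp add: vec_eq_iff transpose_def perm_mat_def)
qed

lemma orthogonal_matrix_perm_mat:
  assumes p: "p permutes (UNIV::'n set)"
  shows "orthogonal_matrix (perm_mat p :: real^'n^'n)"
proof -
  have "(transpose (perm_mat p) ** perm_mat p :: real^'n^'n) $ i $ j = mat 1 $ i $ j" for i j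
  proof -
    have "(transpose (perm_mat p) ** perm_mat p :: real^'n^'n) $ i $ j
        = (\<Sum>k\<in>UNIV. (perm_mat p :: real^'n^'n) $ k $ i * perm_mat p $ k $ j)"
      by (simp add: matrix_matrix_mult_def transpose_def)
    also have "\<dots> = (\<Sum>k\<in>UNIV. if k = p i then (if k = p j then 1 else 0) else 0)"
      by (rule sum.cong) (simp_all add: perm_mat_def)
    also have "\<dots> = mat 1 $ i $ j"
      using permutes_inj[OF p] by (auto simp: mat_def inj_def)
    finally show ?thesis .
  qed
  then show ?thesis
    by (simp add: orthogonal_matrix vec_eq_iff)
qed

lemma perm_mats_transpose: "P \<in> perm_mats \<Longrightarrow> transpose P \<in> perm_mats"
  unfolding perm_mats_def using perm_mat_transpose permutes_inv by blast

lemma orthogonal_matrix_perm_mats: "P \<in> perm_mats \<Longrightarrow> orthogonal_matrix P"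
  unfolding perm_mats_def using orthogonal_matrix_perm_mat by blast

lemma finite_perm_mats: "finite (perm_mats :: (real^'n^'n) set)"
proof -
  have "perm_mats = (perm_mat :: _ \<Rightarrow> real^'n^'n) ` {p. p permutes (UNIV::'n set)}"
    unfolding perm_mats_def by blast
  moreover have "finite {p::'n \<Rightarrow> 'n. p permutes UNIV}"
    by (rule finite_permutations) simp
  ultimately show ?thesis
    by (metis finite_imageI)
qed

lemma perm_dist_le_spec_norm_conj:
  assumes P: "P \<in> perm_mats"
  shows "perm_dist A B \<le> spec_norm (A - transpose P ** B ** P)"
proof -
  have orth: "orthogonal_matrix P"
    using P by (rule orthogonal_matrix_perm_mats)
  have "perm_dist A B
      \<le> onorm (\<lambda>x. transpose (transpose P) *v (A *v x) - B *v (transpose (transpose P) *v x))"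
    unfolding perm_dist_def
    by (rule Min_le[OF finite_imageI[OF finite_perm_mats] imageI[OF perm_mats_transpose[OF P]]])
  also have "\<dots> \<le> spec_norm (A - transpose P ** B ** P)"
  proof (rule onorm_le)
    fix x
    have "P *v (A *v x) - B *v (P *v x) = P *v ((A - transpose P ** B ** P) *v x)"
      using orth by (simp add: matrix_vector_mult_diff_rdistrib matrix_vector_mult_diff_distrib
          matrix_vector_mul_assoc matrix_mul_assoc orthogonal_matrix_def)
    then show "norm (transpose (transpose P) *v (A *v x) - B *v (transpose (transpose P) *v x))
        \<le> spec_norm (A - transpose P ** B ** P) * norm x"
      using orth by (simp add: orthogonal_matrix_norm_mult spec_norm_mult_vec)
  qed
  finally show ?thesis .
qed

lemma transpose_diag_mat_conj:
  "transpose (V ** diag_mat d ** transpose V) = V ** diag_mat d ** transpose V"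
proof -
  have "transpose (diag_mat d) = diag_mat d"
    by (simp add: vec_eq_iff transpose_def diag_mat_def)
  then show ?thesis
    by (simp add: matrix_transpose_mul matrix_mul_assoc)
qed

lemma spec_norm_graph_filter_eigenvalue_shift_le:
  assumes V: "orthogonal_matrix V" and h_conv: "\<And>t. summable (\<lambda>k. h k * t ^ k)"
    and lip: "\<And>s t. \<bar>freq_resp h s - freq_resp h t\<bar> \<le> C * \<bar>s - t\<bar>"
    and shift: "\<And>i. \<bar>m i\<bar> \<le> e"
  shows "spec_norm (graph_filter h (V ** diag_mat l ** transpose V)
      - graph_filter h (V ** diag_mat (\<lambda>i. l i - m i) ** transpose V)) \<le> C * e"
proof -
  have "C \<ge> 0"
    using lip[of 1 0] by simp
  have "\<bar>freq_resp h (l i) - freq_resp h (l i - m i)\<bar> \<le> C * e" for i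
  proof -
    have "\<bar>freq_resp h (l i) - freq_resp h (l i - m i)\<bar> \<le> C * \<bar>m i\<bar>"
      using lip[of "l i" "l i - m i"] by simp
    also have "\<dots> \<le> C * e"
      using shift \<open>C \<ge> 0\<close> by (rule mult_left_mono)
    finally show ?thesis .
  qed
  then have "spec_norm (diag_mat (\<lambda>i. freq_resp h (l i) - freq_resp h (l i - m i))) \<le> C * e"
    by (rule spec_norm_diag_mat_le)
  then show ?thesis
    using V by (simp add: graph_filter_diag_conj h_conv diag_mat_conj_diff spec_norm_orthogonal_conj)
qed

lemma spec_norm_graph_filter_diff_le_sqrt_card:
  fixes A B :: "real^'n^'n"
  assumes A: "transpose A = A" and B: "transpose B = B"
    and h_conv: "\<And>t. summable (\<lambda>k. h k * t ^ k)"
    and lip: "\<And>s t. \<bar>freq_resp h s - freq_resp h t\<bar> \<le> C * \<bar>s - t\<bar>"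
  shows "spec_norm (graph_filter h A - graph_filter h B)
    \<le> C * sqrt (real CARD('n)) * spec_norm (A - B)"
proof -
  obtain V a where V: "orthogonal_matrix V" and A_eq: "A = V ** diag_mat a ** transpose V"
    using symmetric_matrix_orthogonally_diagonalizable[OF A] by blast
  obtain Q b where Q: "orthogonal_matrix Q" and B_eq: "B = Q ** diag_mat b ** transpose Q"
    using symmetric_matrix_orthogonally_diagonalizable[OF B] by blast
  have "C \<ge> 0"
    using lip[of 1 0] by simp
  have "spec_norm (graph_filter h A - graph_filter h B) \<le> norm (graph_filter h A - graph_filter h B)"
    by (rule spec_norm_le_norm)
  also have "\<dots> \<le> C * norm (A - B)"
    using norm_diag_conj_diff_lipschitz[OF V Q lip, of a b]
    by (simp add: A_eq B_eq graph_filter_diag_conj V Q h_conv)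
  also have "\<dots> \<le> C * (sqrt (real CARD('n)) * spec_norm (A - B))"
    using \<open>C \<ge> 0\<close> by (intro mult_left_mono norm_le_sqrt_card_spec_norm)
  finally show ?thesis
    by (simp add: mult.assoc)
qed

lemma spec_norm_graph_filter_diff_le:
  fixes S B :: "real^'n^'n"
  assumes V: "orthogonal_matrix V" and S: "S = V ** diag_mat l ** transpose V"
    and U: "orthogonal_matrix U" and E: "S - B = U ** diag_mat m ** transpose U"
    and B: "transpose B = B"
    and h_conv: "\<And>t. summable (\<lambda>k. h k * t ^ k)"
    and lip: "\<And>s t. \<bar>freq_resp h s - freq_resp h t\<bar> \<le> C * \<bar>s - t\<bar>"
  shows "spec_norm (graph_filter h S - graph_filter h B)
    \<le> C * (1 + 2 * spec_norm (U - V) * sqrt (real CARD('n))) * spec_norm (S - B)"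
proof -
  define T where "T = V ** diag_mat (\<lambda>i. l i - m i) ** transpose V"
  have "C \<ge> 0"
    using lip[of 1 0] by simp
  have E_norm: "spec_norm (S - B) = spec_norm (diag_mat m)"
    using U by (simp add: E spec_norm_orthogonal_conj)
  have "S - T = V ** diag_mat m ** transpose V"
    by (simp add: S T_def diag_mat_conj_diff)
  moreover have "T - B = (S - B) - (S - T)"
    by simp
  ultimately have T_B: "T - B = U ** diag_mat m ** transpose U - V ** diag_mat m ** transpose V"
    by (simp only: E)
  have "\<bar>m i\<bar> \<le> spec_norm (S - B)" for i
    by (simp add: E_norm abs_le_spec_norm_diag_mat)
  then have "spec_norm (graph_filter h S - graph_filter h T) \<le> C * spec_norm (S - B)"
    using spec_norm_graph_filter_eigenvalue_shift_le[OF V h_conv lip] by (simp add: S T_def)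
  moreover have "spec_norm (graph_filter h T - graph_filter h B)
      \<le> C * sqrt (real CARD('n)) * (2 * spec_norm (U - V) * spec_norm (S - B))"
  proof -
    have "spec_norm (graph_filter h T - graph_filter h B)
        \<le> C * sqrt (real CARD('n)) * spec_norm (T - B)"
      unfolding T_def
      by (intro spec_norm_graph_filter_diff_le_sqrt_card B h_conv lip transpose_diag_mat_conj)
    also have "\<dots> \<le> C * sqrt (real CARD('n)) * (2 * spec_norm (U - V) * spec_norm (S - B))"
      using \<open>C \<ge> 0\<close> spec_norm_orthogonal_conj_diff_le[OF U V, of "diag_mat m"]
      by (intro mult_left_mono) (simp_all add: T_B E_norm)
    finally show ?thesis .
  qed
  moreover have "spec_norm (graph_filter h S - graph_filter h B)
      \<le> spec_norm (graph_filter h S - graph_filter h T)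
        + spec_norm (graph_filter h T - graph_filter h B)"
    using spec_norm_triangle[of "graph_filter h S - graph_filter h T"
        "graph_filter h T - graph_filter h B"] by simp
  moreover have "C * (1 + 2 * spec_norm (U - V) * sqrt (real CARD('n))) * spec_norm (S - B)
      = C * spec_norm (S - B)
        + C * sqrt (real CARD('n)) * (2 * spec_norm (U - V) * spec_norm (S - B))"
    by (simp add: algebra_simps)
  ultimately show ?thesis
    by linarith
qed

lemma perm_dist_graph_filter_le:
  fixes S Shat :: "real^'n^'n"
  assumes V: "orthogonal_matrix V" and S: "S = V ** diag_mat l ** transpose V"
    and Shat: "transpose Shat = Shat" and P: "P \<in> perm_mats"
    and U: "orthogonal_matrix U"
    and E: "S - transpose P ** Shat ** P = U ** diag_mat m ** transpose U"
    and h_conv: "\<And>t. summable (\<lambda>k. h k * t ^ k)"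
    and lip: "\<And>s t. \<bar>freq_resp h s - freq_resp h t\<bar> \<le> C * \<bar>s - t\<bar>"
  shows "perm_dist (graph_filter h S) (graph_filter h Shat)
    \<le> C * (1 + 2 * spec_norm (U - V) * sqrt (real CARD('n)))
      * spec_norm (S - transpose P ** Shat ** P)"
proof -
  have B: "transpose (transpose P ** Shat ** P) = transpose P ** Shat ** P"
    using Shat by (simp add: matrix_transpose_mul matrix_mul_assoc)
  have "perm_dist (graph_filter h S) (graph_filter h Shat)
      \<le> spec_norm (graph_filter h S - graph_filter h (transpose P ** Shat ** P))"
    using perm_dist_le_spec_norm_conj[OF P] orthogonal_matrix_perm_mats[OF P] Shat h_conv
    by (simp add: graph_filter_orthogonal_conj)
  also have "\<dots> \<le> C * (1 + 2 * spec_norm (U - V) * sqrt (real CARD('n)))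
      * spec_norm (S - transpose P ** Shat ** P)"
    by (rule spec_norm_graph_filter_diff_le[OF V S U E B h_conv lip])
  finally show ?thesis .
qed

theorem theorem1:
  fixes S V Lam :: "real^'n^'n"
    and h :: "nat \<Rightarrow> real" and C :: real
  assumes S_gso: "symmetric_mat S"
    and V_orth: "orthogonal_matrix V" and Lam_diag: "diagonal_mat Lam"
    and S_eig: "S = V ** Lam ** transpose V"
    and h_conv: "\<And>t. summable (\<lambda>k. h k * t ^ k)"
    and h_bdd: "\<And>t. \<bar>freq_resp h t\<bar> \<le> 1"
    and C_pos: "C > 0"
    and h_lip: "\<And>t1 t2. \<bar>freq_resp h t2 - freq_resp h t1\<bar> \<le> C * \<bar>t2 - t1\<bar>"
  shows "\<exists>K. \<forall>(Shat :: real^'n^'n) P0 E U M (\<epsilon> :: real).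
    symmetric_mat Shat \<longrightarrow>
    P0 \<in> perm_mats \<longrightarrow>
    (\<forall>P\<in>perm_mats. spec_norm (S - transpose P0 ** Shat ** P0) \<le> spec_norm (S - transpose P ** Shat ** P)) \<longrightarrow>
    E = S - transpose P0 ** Shat ** P0 \<longrightarrow>
    orthogonal_matrix U \<longrightarrow> diagonal_mat M \<longrightarrow> E = U ** M ** transpose U \<longrightarrow>
    perm_dist S Shat = spec_norm E \<longrightarrow> spec_norm E \<le> \<epsilon> \<longrightarrow>
    perm_dist (graph_filter h S) (graph_filter h Shat)
      \<le> C * (1 + ((spec_norm (U - V) + 1)\<^sup>2 - 1) * sqrt (real CARD('n))) * \<epsilon> + K * \<epsilon>\<^sup>2"
proof (intro exI[of _ 0] allI impI)
  fix Shat P0 E U M :: "real^'n^'n" and \<epsilon> :: real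
  assume Shat: "symmetric_mat Shat" and P0: "P0 \<in> perm_mats"
    and E: "E = S - transpose P0 ** Shat ** P0"
    and U: "orthogonal_matrix U" and M: "diagonal_mat M" and E_eig: "E = U ** M ** transpose U"
    and E_eps: "spec_norm E \<le> \<epsilon>"
  define d where "d = spec_norm (U - V)"
  have "S = V ** diag_mat (\<lambda>i. Lam $ i $ i) ** transpose V"
    using S_eig diagonal_mat_eq_diag_mat[OF Lam_diag] by simp
  moreover have "S - transpose P0 ** Shat ** P0 = U ** diag_mat (\<lambda>i. M $ i $ i) ** transpose U"
    using E E_eig diagonal_mat_eq_diag_mat[OF M] by simp
  ultimately have "perm_dist (graph_filter h S) (graph_filter h Shat)
      \<le> C * (1 + 2 * d * sqrt (real CARD('n))) * spec_norm E"
    using perm_dist_graph_filter_le[OF V_orth _ _ P0 U _ h_conv h_lip] Shat E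
    by (simp add: d_def symmetric_mat_def)
  also have "\<dots> \<le> C * (1 + ((d + 1)\<^sup>2 - 1) * sqrt (real CARD('n))) * \<epsilon>"
  proof (intro mult_mono mult_left_mono add_left_mono mult_right_mono)
    show "2 * d \<le> (d + 1)\<^sup>2 - 1"
      using spec_norm_nonneg[of "U - V"] by (simp add: d_def power2_eq_square algebra_simps)
  qed (use C_pos E_eps spec_norm_nonneg[of "U - V"] spec_norm_nonneg[of E] in \<open>auto simp: d_def\<close>)
  finally show "perm_dist (graph_filter h S) (graph_filter h Shat)
      \<le> C * (1 + ((spec_norm (U - V) + 1)\<^sup>2 - 1) * sqrt (real CARD('n))) * \<epsilon> + 0 * \<epsilon>\<^sup>2"
    by (simp add: d_def)
qed

end
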